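(* Let $S$ be a sticky tree and let $F$ be the forest obtained by deleting the root of $S$, i.e. the ordered list (left to right) of the subtrees rooted at the children of the root of $S$. Define $f(v)=c(v)-1$ for every node $v$ of $F$, where $c$ is the certificate-counting function of $S$. Then $f$ is a closed flow on $F$.
   Context: Sticky trees: a plane tree is a rooted tree in which the children of every node are linearly ordered (left to right). The root has depth $0$, a child of a node of depth $d$ has depth $d+1$. The prefix order is: the root, followed by the prefix order of the subtree of its leftmost child, then of its second child, and so on. $S_u$ denotes the subtree rooted at $u$. A sticky tree is a plane tree $S$ with node set $V$ and a labeling $\ell:V\to\mathbb{N}$ such that: (1) every node $u$ of depth $d$ has $0\le\ell(u)\le d$; (2) every node $u$ of depth $d>0$ has some $v\in S_u$ (possibly $v=u$) with $\ell(v)<d$; (3) for every node $u$ of depth $d$, if some $v\in S_u$ has $\ell(v)=d$, then every node of $S_u$ (including $u$) preceding $v$ in prefix order has label at least $d$. The certificate of a non-root node $u$ of depth $d$ is the first node, in prefix order, of $S_u$ whose label is $<d$. The certificate-counting function $c:V\to\mathbb{N}$ assigns to each node $w$ the number of non-root nodes whose certificate is $w$. Flows: a forest is an ordered list $(A_1,\dots,A_k)$ of plane trees. A flow on a forest $F$ is an integer-valued function $f$ on its nodes with $f(v)\ge -1$ for every node $v$ and such that the outgoing rate of every node is nonnegative, where the outgoing rate of $v$ is $\sum_{w} f(w)$ over all nodes $w$ of the subtree of $F$ rooted at $v$ (including $v$). A flow is closed if the outgoing rate of the root of every $A_i$ is $0$. *)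

theory Defs
  imports Main "HOL-Library.Sublist"
begin

text \<open>Plane trees: each node has an ordered list of children.
  Nodes are addressed by positions (paths of child indices from the root);
  the root is [], the depth of a node is the length of its position.\<close>
datatype ptree = Node "ptree list"

fun children :: "ptree \<Rightarrow> ptree list" where
  "children (Node ts) = ts"

lemma size_nth_less: "i < length ts \<Longrightarrow> size (ts ! i) < Suc (size_list size ts)"
  by (metis le_imp_less_Suc nth_mem order_refl size_list_estimation')

function pos :: "ptree \<Rightarrow> nat list set" where
  "pos (Node ts) = insert [] (\<Union>i\<in>{..<length ts}. (#) i ` pos (ts ! i))"
  by pat_completeness auto
termination by (relation "measure size") (auto intro: size_nth_less)

function subtree_at :: "ptree \<Rightarrow> nat list \<Rightarrow> ptree" where
  "subtree_at t [] = t"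
| "subtree_at (Node ts) (i # p) = (if i < length ts then subtree_at (ts ! i) p else Node [])"
  by pat_completeness auto
termination by (relation "measure (size \<circ> fst)") (auto intro: size_nth_less)

function preorder :: "ptree \<Rightarrow> nat list list" where
  "preorder (Node ts) =
     [] # concat (map (\<lambda>i. map ((#) i) (preorder (ts ! i))) [0..<length ts])"
  by pat_completeness auto
termination by (relation "measure size") (auto intro: size_nth_less)

definition sub_preorder :: "ptree \<Rightarrow> nat list \<Rightarrow> nat list list" where
  "sub_preorder t u = map ((@) u) (preorder (subtree_at t u))"

definition sub_nodes :: "ptree \<Rightarrow> nat list \<Rightarrow> nat list set" where
  "sub_nodes t u = (@) u ` pos (subtree_at t u)"

definition precedes_in :: "'a list \<Rightarrow> 'a \<Rightarrow> 'a \<Rightarrow> bool" where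
  "precedes_in xs a b \<longleftrightarrow> (\<exists>i j. i < j \<and> j < length xs \<and> xs ! i = a \<and> xs ! j = b)"

definition sticky :: "ptree \<Rightarrow> (nat list \<Rightarrow> nat) \<Rightarrow> bool" where
  "sticky S l \<longleftrightarrow>
     (\<forall>u\<in>pos S. l u \<le> length u) \<and>
     (\<forall>u\<in>pos S. u \<noteq> [] \<longrightarrow> (\<exists>v\<in>sub_nodes S u. l v < length u)) \<and>
     (\<forall>u\<in>pos S. \<forall>v\<in>sub_nodes S u. l v = length u \<longrightarrow>
        (\<forall>w\<in>sub_nodes S u. precedes_in (sub_preorder S u) w v \<longrightarrow> l w \<ge> length u))"

definition certificate :: "ptree \<Rightarrow> (nat list \<Rightarrow> nat) \<Rightarrow> nat list \<Rightarrow> nat list" where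
  "certificate S l u = hd (filter (\<lambda>v. l v < length u) (sub_preorder S u))"

definition cert_count :: "ptree \<Rightarrow> (nat list \<Rightarrow> nat) \<Rightarrow> nat list \<Rightarrow> nat" where
  "cert_count S l w = card {u \<in> pos S. u \<noteq> [] \<and> certificate S l u = w}"

text \<open>Forests: ordered lists of plane trees. Node p of the i-th tree A_i is addressed as i # p.\<close>
definition forest_nodes :: "ptree list \<Rightarrow> nat list set" where
  "forest_nodes F = {i # p | i p. i < length F \<and> p \<in> pos (F ! i)}"

definition out_rate :: "ptree list \<Rightarrow> (nat list \<Rightarrow> int) \<Rightarrow> nat list \<Rightarrow> int" where
  "out_rate F f v = (\<Sum>w\<in>{w \<in> forest_nodes F. prefix v w}. f w)"

definition is_flow :: "ptree list \<Rightarrow> (nat list \<Rightarrow> int) \<Rightarrow> bool" where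
  "is_flow F f \<longleftrightarrow> (\<forall>v\<in>forest_nodes F. f v \<ge> -1 \<and> out_rate F f v \<ge> 0)"

definition is_closed_flow :: "ptree list \<Rightarrow> (nat list \<Rightarrow> int) \<Rightarrow> bool" where
  "is_closed_flow F f \<longleftrightarrow> is_flow F f \<and> (\<forall>i < length F. out_rate F f [i] = 0)"

end

theory Submission
  imports Defs
begin

text \<open>Every non-root node u has its certificate in S_u, so the certificate map sends the
  non-root nodes of any subtree S_v into S_v. Hence the outgoing rate of v, which is the
  number of nodes certified inside S_v minus the number of nodes of S_v, is nonnegative.
  If v is a child of the root, a node certified inside S_v is a non-root ancestor of a node
  of S_v, hence itself in S_v; so the two counts agree and the flow is closed. Only the
  existence of certificates, condition (2) of stickiness, is needed.\<close>

lemma set_preorder: "set (preorder t) = pos t"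
  by (induction t rule: preorder.induct) (auto simp: image_iff)

lemma finite_pos: "finite (pos t)"
  by (induction t rule: pos.induct) auto

lemma append_in_pos_iff:
  assumes "u \<in> pos t"
  shows "u @ p \<in> pos t \<longleftrightarrow> p \<in> pos (subtree_at t u)"
  using assms
proof (induction u arbitrary: t)
  case Nil
  then show ?case by simp
next
  case (Cons i u)
  obtain ts where t: "t = Node ts" by (cases t)
  with Cons.prems have "i < length ts" and "u \<in> pos (ts ! i)" by auto
  with t Cons.IH show ?case by auto
qed

lemma sub_nodes_eq: "u \<in> pos t \<Longrightarrow> sub_nodes t u = {v \<in> pos t. prefix u v}"
  unfolding sub_nodes_def using append_in_pos_iff[of u t] by (auto simp: prefix_def)

lemma set_sub_preorder: "set (sub_preorder t u) = sub_nodes t u"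
  by (simp add: sub_preorder_def sub_nodes_def set_preorder)

lemma forest_nodes_children: "forest_nodes (children S) = pos S - {[]}"
  by (cases S) (auto simp: forest_nodes_def)

lemma certificate_in_sub_nodes:
  assumes "v \<in> sub_nodes S u" and "l v < length u"
  shows "certificate S l u \<in> sub_nodes S u"
proof -
  have "filter (\<lambda>v. l v < length u) (sub_preorder S u) \<noteq> []"
    using assms by (simp add: filter_empty_conv set_sub_preorder) blast
  then have "certificate S l u \<in> set (filter (\<lambda>v. l v < length u) (sub_preorder S u))"
    unfolding certificate_def by (rule list.set_sel(1))
  then show ?thesis by (simp add: set_sub_preorder)
qed

lemma sticky_certificate_descendant:
  assumes "sticky S l" and "u \<in> pos S - {[]}"
  shows "certificate S l u \<in> pos S - {[]}" and "prefix u (certificate S l u)"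
proof -
  from assms obtain v where "v \<in> sub_nodes S u" and "l v < length u"
    unfolding sticky_def by blast
  then have "certificate S l u \<in> sub_nodes S u"
    by (rule certificate_in_sub_nodes)
  with assms(2) sub_nodes_eq[of u S]
  show "prefix u (certificate S l u)" and "certificate S l u \<in> pos S - {[]}" by auto
qed

lemma card_preimage_eq_sum_fibres:
  assumes "finite N" and "finite W"
  shows "card {u \<in> N. g u \<in> W} = (\<Sum>w\<in>W. card {u \<in> N. g u = w})"
proof -
  have "(\<Sum>w\<in>W. \<Sum>u\<in>{x \<in> {u \<in> N. g u \<in> W}. g x = w}. 1) = (\<Sum>u\<in>{u \<in> N. g u \<in> W}. 1 :: nat)"
    by (rule sum.group) (use assms in auto)
  moreover have "{x \<in> {u \<in> N. g u \<in> W}. g x = w} = {u \<in> N. g u = w}" if "w \<in> W" for w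
    using that by auto
  ultimately show ?thesis by simp
qed

lemma out_rate_cert_count:
  fixes S :: ptree and l :: "nat list \<Rightarrow> nat" and v :: "nat list"
  defines "N \<equiv> pos S - {[]}" and "D \<equiv> {w \<in> pos S - {[]}. prefix v w}"
  shows "out_rate (children S) (\<lambda>w. int (cert_count S l w) - 1) v
    = int (card {u \<in> N. certificate S l u \<in> D}) - int (card D)"
proof -
  have "finite N" and "finite D"
    unfolding N_def D_def using finite_pos by auto
  have "cert_count S l w = card {u \<in> N. certificate S l u = w}" for w
    unfolding cert_count_def N_def by (rule arg_cong[where f = card]) auto
  then have "out_rate (children S) (\<lambda>w. int (cert_count S l w) - 1) v
      = int (\<Sum>w\<in>D. card {u \<in> N. certificate S l u = w}) - int (card D)"
    unfolding out_rate_def forest_nodes_children D_def by (simp add: sum_subtractf)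
  also have "\<dots> = int (card {u \<in> N. certificate S l u \<in> D}) - int (card D)"
    using card_preimage_eq_sum_fibres[OF \<open>finite N\<close> \<open>finite D\<close>] by simp
  finally show ?thesis .
qed

lemma prefix_Cons_of_prefix_descendant:
  assumes "u \<noteq> []" and "prefix u w" and "prefix [i] w"
  shows "prefix [i] u"
  using assms by (metis prefix_Cons prefix_Nil prefix_same_cases)

lemma child_prefix_of_certificate:
  assumes "sticky S l" and "u \<in> pos S - {[]}" and "prefix [i] (certificate S l u)"
  shows "prefix [i] u"
proof (rule prefix_Cons_of_prefix_descendant)
  show "u \<noteq> []" and "prefix u (certificate S l u)"
    using assms(2) sticky_certificate_descendant(2)[OF assms(1,2)] by auto
qed (fact assms(3))

theorem mainTheorem5:
  fixes S :: ptree and l :: "nat list \<Rightarrow> nat"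
  assumes "sticky S l"
  shows "is_closed_flow (children S) (\<lambda>v. int (cert_count S l v) - 1)"
proof -
  define N where "N = pos S - {[]}"
  define D where "D v = {w \<in> N. prefix v w}" for v
  define P where "P v = {u \<in> N. certificate S l u \<in> D v}" for v
  have rate: "out_rate (children S) (\<lambda>w. int (cert_count S l w) - 1) v
      = int (card (P v)) - int (card (D v))" for v
    unfolding P_def D_def N_def by (rule out_rate_cert_count)
  have cert: "certificate S l u \<in> N" "prefix u (certificate S l u)" if "u \<in> N" for u
    using sticky_certificate_descendant[OF assms that[unfolded N_def]] unfolding N_def by auto
  have "finite (P v)" for v
    unfolding P_def N_def using finite_pos by auto
  have D_subset_P: "D v \<subseteq> P v" for v
    unfolding D_def P_def using cert by (auto intro: prefix_order.trans)
  then have "card (D v) \<le> card (P v)" for v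
    using \<open>finite (P v)\<close> by (rule card_mono[rotated])
  then have flow: "is_flow (children S) (\<lambda>w. int (cert_count S l w) - 1)"
    unfolding is_flow_def by (simp add: rate)
  have "P [i] \<subseteq> D [i]" for i
    unfolding P_def D_def N_def
    using child_prefix_of_certificate[OF assms] by blast
  with D_subset_P have "P [i] = D [i]" for i
    by (simp add: subset_antisym)
  with flow show ?thesis
    unfolding is_closed_flow_def by (simp add: rate)
qed

end
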